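(* Let $\mathcal C$ be a concept hierarchy, $r_1,r_2,\epsilon\in[0,1]$ with $r_1\le r_2(1-\epsilon)$, $m$ a positive integer, and let $\mathcal H$ be the network defined below with a fixed failed set $F$ satisfying the stated constraint. Then $\mathcal H$ $(r_1,r_2)$-recognizes $\mathcal C$: for every $B\subseteq C_0$ presented at time 0, (1) if $c\in supp_{r_2}(B)$ then at least $m(1-\epsilon)$ of the neurons $v\in reps(c)$ fire at time $level(c)$, and (2) if $c\notin supp_{r_1}(B)$ then no neuron $v\in reps(c)$ fires at time $level(c)$.
   Context: Concept hierarchies: fix positive integers $\ell_{max},n,k$. A universal set $D$ of concepts is partitioned into disjoint sets $D_0,\dots,D_{\ell_{max}}$ with $|D_0|=n$; $level(c)=\ell$ for $c\in D_\ell$. A concept hierarchy $\mathcal C$ consists of $C\subseteq D$, with $C_\ell=C\cap D_\ell$, and for each $c\in C_\ell$ with $1\le\ell\le\ell_{max}$ a set $children(c)\subseteq C_{\ell-1}$, such that $|C_{\ell_{max}}|=k$, $|children(c)|=k$ for all such $c$, and $children(c)\cap children(c')=\emptyset$ for distinct $c,c'\in C_\ell$. For $B\subseteq D_0$ and $r\in[0,1]$: $B(0)=B\cap C_0$; for $1\le\ell\le\ell_{max}$, $B(\ell)=\{c\in C_\ell:|children(c)\cap B(\ell-1)|\ge rk\}$; $supp_r(B)=\bigcup_{\ell}B(\ell)$. Network $\mathcal H$: neurons partitioned into layers $N_0,\dots,N_{\ell_{max}}$. Each $c\in D_0$ has a set $reps(c)$ of $m$ neurons in $N_0$, each $c\in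 C$ with $level(c)\ge1$ a set $reps(c)$ of $m$ neurons in $N_{level(c)}$, all pairwise disjoint. For $u\in N_{\ell-1}$, $v\in N_\ell$: $w(u,v)=1$ iff $v\in reps(c)$ and $u\in reps(c')$ for a child $c'$ of $c$, else $0$. Threshold $\tau=r_2km(1-\epsilon)$. A fixed set $F$ of neurons is failed (failed neurons never fire), such that for every concept $c$ at least $m(1-\epsilon)$ neurons of $reps(c)$ are not in $F$. Input $B\subseteq C_0$ presented at time 0: a layer-0 neuron fires at time 0 iff it is in $\bigcup_{b\in B}reps(b)\setminus F$, and no layer-0 neuron fires at any other time. A non-failed $v\in N_\ell$, $\ell\ge1$, does not fire at time 0 and fires at time $t\ge1$ iff $\sum_{u\in N_{\ell-1}}w(u,v)x_u(t-1)\ge\tau$, where $x_u(s)\in\{0,1\}$ indicates whether $u$ fires at time $s$. *)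

theory Defs
  imports Main "HOL.Real"
begin

definition lvl :: "'c set \<Rightarrow> ('c \<Rightarrow> nat) \<Rightarrow> nat \<Rightarrow> 'c set" where
  "lvl S level l = {c \<in> S. level c = l}"

definition concept_hierarchy ::
  "'c set \<Rightarrow> ('c \<Rightarrow> nat) \<Rightarrow> nat \<Rightarrow> nat \<Rightarrow> nat \<Rightarrow> 'c set \<Rightarrow> ('c \<Rightarrow> 'c set) \<Rightarrow> bool" where
  "concept_hierarchy D level lmax n k C children \<longleftrightarrow>
     (\<forall>c\<in>D. level c \<le> lmax) \<and>
     card (lvl D level 0) = n \<and>
     C \<subseteq> D \<and>
     card (lvl C level lmax) = k \<and>
     (\<forall>c\<in>C. 1 \<le> level c \<and> level c \<le> lmax \<longrightarrow>
        children c \<subseteq> lvl C level (level c - 1) \<and> card (children c) = k) \<and>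
     (\<forall>c\<in>C. \<forall>c'\<in>C. level c = level c' \<and> 1 \<le> level c \<and> c \<noteq> c' \<longrightarrow>
        children c \<inter> children c' = {})"

fun Bset :: "'c set \<Rightarrow> ('c \<Rightarrow> nat) \<Rightarrow> ('c \<Rightarrow> 'c set) \<Rightarrow> nat \<Rightarrow> real \<Rightarrow> 'c set \<Rightarrow> nat \<Rightarrow> 'c set" where
  "Bset C level children k r B 0 = B \<inter> lvl C level 0"
| "Bset C level children k r B (Suc l) =
     {c \<in> lvl C level (Suc l).
        real (card (children c \<inter> Bset C level children k r B l)) \<ge> r * real k}"

definition supp :: "'c set \<Rightarrow> ('c \<Rightarrow> nat) \<Rightarrow> ('c \<Rightarrow> 'c set) \<Rightarrow> nat \<Rightarrow> nat \<Rightarrow> real \<Rightarrow> 'c set \<Rightarrow> 'c set" where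
  "supp C level children lmax k r B = (\<Union>l\<in>{0..lmax}. Bset C level children k r B l)"

definition network_structure ::
  "'n set \<Rightarrow> ('n \<Rightarrow> nat) \<Rightarrow> nat \<Rightarrow> 'c set \<Rightarrow> ('c \<Rightarrow> nat) \<Rightarrow> 'c set \<Rightarrow> ('c \<Rightarrow> 'n set) \<Rightarrow> nat \<Rightarrow> bool" where
  "network_structure N layer lmax D level C reps m \<longleftrightarrow>
     finite N \<and>
     (\<forall>u\<in>N. layer u \<le> lmax) \<and>
     (\<forall>c\<in>lvl D level 0. reps c \<subseteq> lvl N layer 0 \<and> card (reps c) = m) \<and>
     (\<forall>c\<in>C. 1 \<le> level c \<longrightarrow> reps c \<subseteq> lvl N layer (level c) \<and> card (reps c) = m) \<and>
     (\<forall>c\<in>lvl D level 0 \<union> C. \<forall>c'\<in>lvl D level 0 \<union> C. c \<noteq> c' \<longrightarrow> reps c \<inter> reps c' = {})"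

definition weight :: "'c set \<Rightarrow> ('c \<Rightarrow> nat) \<Rightarrow> ('c \<Rightarrow> 'c set) \<Rightarrow> ('c \<Rightarrow> 'n set) \<Rightarrow> 'n \<Rightarrow> 'n \<Rightarrow> real" where
  "weight C level children reps u v =
     (if \<exists>c\<in>C. 1 \<le> level c \<and> v \<in> reps c \<and> (\<exists>c'\<in>children c. u \<in> reps c') then 1 else 0)"

text \<open>Firing: fires ... t u means neuron u fires at time t, given input neurons I
  (the representatives of the presented set B), failed set F, threshold tau.\<close>
fun fires :: "'n set \<Rightarrow> ('n \<Rightarrow> nat) \<Rightarrow> ('n \<Rightarrow> 'n \<Rightarrow> real) \<Rightarrow> real \<Rightarrow> 'n set \<Rightarrow> 'n set \<Rightarrow> nat \<Rightarrow> 'n \<Rightarrow> bool" where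
  "fires N layer w tau F I 0 u = (u \<in> N \<and> layer u = 0 \<and> u \<in> I \<and> u \<notin> F)"
| "fires N layer w tau F I (Suc t) u =
     (u \<in> N \<and> 1 \<le> layer u \<and> u \<notin> F \<and>
      (\<Sum>u'\<in>lvl N layer (layer u - 1). w u' u * (if fires N layer w tau F I t u' then 1 else 0)) \<ge> tau)"

end

theory Submission
  imports Defs
begin

text \<open>
  The input of a representative of a concept \<open>c\<close> at time \<open>t + 1\<close> is exactly the number of
  representatives of children of \<open>c\<close> that fire at time \<open>t\<close>, since the weights are the indicator
  of those representatives and representative sets are disjoint. If \<open>c \<in> B(\<ell>)\<close> for \<open>r\<^sub>2\<close>, at least \<open>r\<^sub>2 k\<close> children each have \<open>m(1 - \<epsilon>)\<close>
  firing representatives, so every non-failed representative of \<open>c\<close> reaches the threshold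
  \<open>\<tau> = r\<^sub>2 k m (1 - \<epsilon>)\<close>. If \<open>c \<notin> B(\<ell>)\<close> for \<open>r\<^sub>1\<close>, fewer than \<open>r\<^sub>1 k\<close> children have any firing
  representative, so the input stays below \<open>r\<^sub>1 k m \<le> \<tau>\<close>.
\<close>

lemma Bset_subset_lvl: "Bset C level children k r B l \<subseteq> lvl C level l"
  by (cases l) (auto simp: lvl_def)

lemma mem_supp_iff:
  "c \<in> supp C level children lmax k r B \<longleftrightarrow>
     level c \<le> lmax \<and> c \<in> Bset C level children k r B (level c)"
proof
  assume "c \<in> supp C level children lmax k r B"
  then obtain l where "l \<le> lmax" "c \<in> Bset C level children k r B l"
    by (auto simp: supp_def)
  moreover from this(2) have "level c = l"
    using Bset_subset_lvl by (fastforce simp: lvl_def)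
  ultimately show "level c \<le> lmax \<and> c \<in> Bset C level children k r B (level c)"
    by simp
qed (auto simp: supp_def)

lemma network_structure_reps:
  assumes "network_structure N layer lmax D level C reps m" "C \<subseteq> D" "c \<in> C"
  shows "reps c \<subseteq> lvl N layer (level c)" "card (reps c) = m"
proof -
  have "c \<in> lvl D level 0" if "level c = 0" using assms(2,3) that by (auto simp: lvl_def)
  then have "reps c \<subseteq> lvl N layer (level c) \<and> card (reps c) = m"
    using assms(1,3) unfolding network_structure_def by (cases "level c = 0") auto
  then show "reps c \<subseteq> lvl N layer (level c)" "card (reps c) = m" by auto
qed

locale concept_network =
  fixes C :: "'c set" and level :: "'c \<Rightarrow> nat" and children :: "'c \<Rightarrow> 'c set"
    and N :: "'n set" and layer :: "'n \<Rightarrow> nat" and reps :: "'c \<Rightarrow> 'n set"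
  assumes finite_N: "finite N"
    and children_level: "c \<in> C \<Longrightarrow> 1 \<le> level c \<Longrightarrow> children c \<subseteq> lvl C level (level c - 1)"
    and finite_children: "c \<in> C \<Longrightarrow> 1 \<le> level c \<Longrightarrow> finite (children c)"
    and reps_layer: "c \<in> C \<Longrightarrow> reps c \<subseteq> lvl N layer (level c)"
    and reps_disjoint: "c \<in> C \<Longrightarrow> c' \<in> C \<Longrightarrow> c \<noteq> c' \<Longrightarrow> reps c \<inter> reps c' = {}"
begin

abbreviation net_fires :: "real \<Rightarrow> 'n set \<Rightarrow> 'c set \<Rightarrow> nat \<Rightarrow> 'n \<Rightarrow> bool" where
  "net_fires \<tau> F B \<equiv> fires N layer (weight C level children reps) \<tau> F (\<Union>b\<in>B. reps b)"

lemma finite_reps: "c \<in> C \<Longrightarrow> finite (reps c)"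
  using reps_layer finite_N by (auto simp: lvl_def intro: finite_subset)

lemma child_in_C:
  assumes "c \<in> C" "level c = Suc l" "c' \<in> children c"
  shows "c' \<in> C" "level c' = l"
  using children_level[OF assms(1)] assms(2,3) by (auto simp: lvl_def)

lemma weight_reps:
  assumes "c \<in> C" "1 \<le> level c" "v \<in> reps c"
  shows "weight C level children reps u v = (if u \<in> (\<Union>c'\<in>children c. reps c') then 1 else 0)"
proof -
  have unique: "c'' = c" if "c'' \<in> C" "v \<in> reps c''" for c''
  proof (rule ccontr)
    assume "c'' \<noteq> c"
    then have "reps c \<inter> reps c'' = {}"
      using reps_disjoint[OF assms(1) that(1)] by simp
    then show False
      using assms(3) that(2) by auto
  qed
  have "(\<exists>c''\<in>C. 1 \<le> level c'' \<and> v \<in> reps c'' \<and> (\<exists>c'\<in>children c''. u \<in> reps c'))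
      \<longleftrightarrow> u \<in> (\<Union>c'\<in>children c. reps c')"
  proof
    assume "\<exists>c''\<in>C. 1 \<le> level c'' \<and> v \<in> reps c'' \<and> (\<exists>c'\<in>children c''. u \<in> reps c')"
    then obtain c'' where "c'' \<in> C" "v \<in> reps c''" "\<exists>c'\<in>children c''. u \<in> reps c'"
      by blast
    moreover from this(1,2) have "c'' = c"
      by (rule unique)
    ultimately show "u \<in> (\<Union>c'\<in>children c. reps c')"
      by simp
  qed (use assms in blast)
  then show ?thesis
    unfolding weight_def by simp
qed

lemma input_eq_sum_children:
  assumes "c \<in> C" "1 \<le> level c" "v \<in> reps c"
  shows "(\<Sum>u\<in>lvl N layer (level c - 1). weight C level children reps u v * (if P u then 1 else 0))
    = real (\<Sum>c'\<in>children c. card {u \<in> reps c'. P u})"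
proof -
  let ?U = "\<Union>c'\<in>children c. {u \<in> reps c'. P u}"
  have children_C: "children c \<subseteq> C"
    using children_level[OF assms(1,2)] by (auto simp: lvl_def)
  have U_sub: "?U \<subseteq> lvl N layer (level c - 1)"
    using children_level[OF assms(1,2)] reps_layer by (fastforce simp: lvl_def)
  then have "(\<Sum>u\<in>lvl N layer (level c - 1). weight C level children reps u v * (if P u then 1 else 0))
      = (\<Sum>u\<in>lvl N layer (level c - 1). if u \<in> ?U then 1 else 0)"
    by (intro sum.cong) (auto simp: weight_reps[OF assms])
  also have "\<dots> = (\<Sum>u\<in>?U. 1)"
    using finite_N U_sub by (intro sum.mono_neutral_cong_right) (auto simp: lvl_def)
  also have "\<dots> = real (card ?U)"
    by simp
  also have "card ?U = (\<Sum>c'\<in>children c. card {u \<in> reps c'. P u})"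
  proof (intro card_UN_disjoint ballI impI)
    fix c' c'' assume "c' \<in> children c" "c'' \<in> children c" "c' \<noteq> c''"
    then show "{u \<in> reps c'. P u} \<inter> {u \<in> reps c''. P u} = {}"
      using reps_disjoint children_C by blast
  qed (use finite_children[OF assms(1,2)] children_C finite_reps in auto)
  finally show ?thesis .
qed

lemma fires_0_reps:
  assumes "c \<in> C" "level c = 0" "v \<in> reps c"
  shows "fires N layer w \<tau> F I 0 v \<longleftrightarrow> v \<in> I \<and> v \<notin> F"
  using reps_layer[OF assms(1)] assms by (auto simp: lvl_def)

lemma fires_Suc_reps:
  assumes "c \<in> C" "level c = Suc l" "v \<in> reps c"
  shows "fires N layer (weight C level children reps) \<tau> F I (Suc l) v \<longleftrightarrow>
    v \<notin> F \<and> \<tau> \<le> real (\<Sum>c'\<in>children c.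
      card {u \<in> reps c'. fires N layer (weight C level children reps) \<tau> F I l u})"
proof -
  have "v \<in> N" "layer v = Suc l"
    using reps_layer[OF assms(1)] assms(2,3) by (auto simp: lvl_def)
  then show ?thesis
    using input_eq_sum_children[OF assms(1) _ assms(3)] assms(2) by simp
qed

lemma card_firing_reps_if_Bset:
  assumes live: "\<And>c. c \<in> C \<Longrightarrow> q \<le> real (card (reps c - F))"
    and "0 \<le> q" and threshold: "\<tau> \<le> r * real k * q"
    and "c \<in> Bset C level children k r B l"
  shows "q \<le> real (card {v \<in> reps c. net_fires \<tau> F B l v})"
proof -
  have live_reps_fire: "q \<le> real (card {v \<in> reps c. P v})"
    if "c \<in> C" "\<And>v. v \<in> reps c \<Longrightarrow> v \<notin> F \<Longrightarrow> P v" for c P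
  proof -
    have "card (reps c - F) \<le> card {v \<in> reps c. P v}"
      using that finite_reps by (intro card_mono) auto
    then show ?thesis using live[OF that(1)] by linarith
  qed
  show ?thesis using assms(4)
  proof (induction l arbitrary: c)
    case 0
    then have "c \<in> C" "level c = 0" "c \<in> B" by (auto simp: lvl_def)
    then show ?case
      using fires_0_reps by (intro live_reps_fire) auto
  next
    case (Suc l)
    define S where "S = children c \<inter> Bset C level children k r B l"
    have c: "c \<in> C" "level c = Suc l" and card_S: "r * real k \<le> real (card S)"
      using Suc.prems by (auto simp: lvl_def S_def)
    have "\<tau> \<le> real (card S) * q"
      using threshold mult_right_mono[OF card_S \<open>0 \<le> q\<close>] by linarith
    also have "\<dots> = (\<Sum>c'\<in>S. q)"
      by simp
    also have "\<dots> \<le> (\<Sum>c'\<in>S. real (card {u \<in> reps c'. net_fires \<tau> F B l u}))"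
      by (intro sum_mono) (simp add: Suc.IH S_def)
    also have "\<dots> \<le> (\<Sum>c'\<in>children c. real (card {u \<in> reps c'. net_fires \<tau> F B l u}))"
      using finite_children c by (intro sum_mono2) (auto simp: S_def)
    finally have "\<tau> \<le> real (\<Sum>c'\<in>children c. card {u \<in> reps c'. net_fires \<tau> F B l u})"
      by simp
    then show ?case
      using fires_Suc_reps[OF c] by (intro live_reps_fire[OF c(1)]) auto
  qed
qed

lemma no_firing_reps_if_not_Bset:
  assumes card_reps: "\<And>c. c \<in> C \<Longrightarrow> card (reps c) \<le> m"
    and "0 < m" and threshold: "r * real k * real m \<le> \<tau>" and "B \<subseteq> C"
    and "c \<in> C" "level c = l" "c \<notin> Bset C level children k r B l" "v \<in> reps c"
  shows "\<not> net_fires \<tau> F B l v"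
  using assms(5-)
proof (induction l arbitrary: c v)
  case 0
  have "v \<notin> reps b" if "b \<in> B" for b
    using reps_disjoint[of c b] \<open>B \<subseteq> C\<close> 0 that by (auto simp: lvl_def)
  then show ?case
    using fires_0_reps[OF "0.prems"(1,2,4)] by auto
next
  case (Suc l)
  define S where "S = children c \<inter> Bset C level children k r B l"
  have c: "c \<in> C" "level c = Suc l" and card_S: "real (card S) < r * real k"
    using Suc.prems by (auto simp: lvl_def S_def)
  have silent: "card {u \<in> reps c'. net_fires \<tau> F B l u} = 0" if "c' \<in> children c - S" for c'
  proof -
    have "c' \<in> C" "level c' = l" "c' \<notin> Bset C level children k r B l"
      using child_in_C[OF c] that by (auto simp: S_def)
    then have "{u \<in> reps c'. net_fires \<tau> F B l u} = {}"
      using Suc.IH by blast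
    then show ?thesis
      by (simp only: card.empty)
  qed
  have "(\<Sum>c'\<in>children c. card {u \<in> reps c'. net_fires \<tau> F B l u})
      = (\<Sum>c'\<in>S. card {u \<in> reps c'. net_fires \<tau> F B l u})"
    using finite_children c silent by (intro sum.mono_neutral_right) (auto simp: S_def)
  also have "\<dots> \<le> (\<Sum>c'\<in>S. m)"
  proof (intro sum_mono)
    fix c' assume "c' \<in> S"
    then have "c' \<in> C" using child_in_C[OF c] by (auto simp: S_def)
    then have "card {u \<in> reps c'. net_fires \<tau> F B l u} \<le> card (reps c')"
      using finite_reps by (intro card_mono) auto
    then show "card {u \<in> reps c'. net_fires \<tau> F B l u} \<le> m"
      using card_reps[OF \<open>c' \<in> C\<close>] by linarith
  qed
  also have "\<dots> = card S * m"
    by simp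
  finally have "real (\<Sum>c'\<in>children c. card {u \<in> reps c'. net_fires \<tau> F B l u})
      \<le> real (card S * m)"
    by (rule of_nat_mono)
  also have "\<dots> = real (card S) * real m"
    by (rule of_nat_mult)
  also have "\<dots> < r * real k * real m"
    using card_S \<open>0 < m\<close> by simp
  finally have "\<not> \<tau> \<le> real (\<Sum>c'\<in>children c. card {u \<in> reps c'. net_fires \<tau> F B l u})"
    using threshold by linarith
  then show ?case
    using fires_Suc_reps[OF c Suc.prems(4)] by blast
qed

end

lemma concept_network_if_structures:
  assumes hier: "concept_hierarchy D level lmax n k C children"
    and net: "network_structure N layer lmax D level C reps m" and "0 < k"
  shows "concept_network C level children N layer reps"
proof
  have C_sub_D: "C \<subseteq> D" and level_le: "\<forall>c\<in>D. level c \<le> lmax"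
    using hier by (auto simp: concept_hierarchy_def)
  then show "reps c \<subseteq> lvl N layer (level c)" if "c \<in> C" for c
    using network_structure_reps(1)[OF net _ that] by simp
  show "finite N"
    using net by (simp add: network_structure_def)
  show "reps c \<inter> reps c' = {}" if "c \<in> C" "c' \<in> C" "c \<noteq> c'" for c c'
    using net that by (auto simp: network_structure_def)
  fix c assume "c \<in> C" "1 \<le> level c"
  then have "children c \<subseteq> lvl C level (level c - 1) \<and> card (children c) = k"
    using hier C_sub_D level_le unfolding concept_hierarchy_def by blast
  then show "children c \<subseteq> lvl C level (level c - 1)" "finite (children c)"
    using \<open>0 < k\<close> card_ge_0_finite by auto
qed

theorem theorem7p5:
  fixes D C :: "'c set" and level :: "'c \<Rightarrow> nat" and children :: "'c \<Rightarrow> 'c set"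
    and N F :: "'n set" and layer :: "'n \<Rightarrow> nat" and reps :: "'c \<Rightarrow> 'n set"
    and lmax n k m :: nat and r1 r2 \<epsilon> :: real
  assumes "0 < lmax" "0 < n" "0 < k" "0 < m"
    and hier: "concept_hierarchy D level lmax n k C children"
    and "0 \<le> r1" "r1 \<le> 1" "0 \<le> r2" "r2 \<le> 1" "0 \<le> \<epsilon>" "\<epsilon> \<le> 1"
    and "r1 \<le> r2 * (1 - \<epsilon>)"
    and net: "network_structure N layer lmax D level C reps m"
    and faults: "\<forall>c\<in>lvl D level 0 \<union> C. real (card (reps c - F)) \<ge> real m * (1 - \<epsilon>)"
  shows "\<forall>B. B \<subseteq> lvl C level 0 \<longrightarrow>
     (\<forall>c\<in>supp C level children lmax k r2 B.
        real (card {v \<in> reps c. fires N layer (weight C level children reps)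
                     (r2 * real k * real m * (1 - \<epsilon>)) F (\<Union>b\<in>B. reps b) (level c) v})
          \<ge> real m * (1 - \<epsilon>)) \<and>
     (\<forall>c\<in>C - supp C level children lmax k r1 B. \<forall>v\<in>reps c.
        \<not> fires N layer (weight C level children reps)
             (r2 * real k * real m * (1 - \<epsilon>)) F (\<Union>b\<in>B. reps b) (level c) v)"
proof -
  interpret concept_network C level children N layer reps
    using concept_network_if_structures[OF hier net \<open>0 < k\<close>] .
  have C_sub_D: "C \<subseteq> D" and level_le: "\<forall>c\<in>D. level c \<le> lmax"
    using hier by (auto simp: concept_hierarchy_def)
  have card_reps: "card (reps c) \<le> m" if "c \<in> C" for c
    using network_structure_reps(2)[OF net C_sub_D that] by simp
  let ?\<tau> = "r2 * real k * real m * (1 - \<epsilon>)"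
  have "r1 * real k * real m \<le> r2 * (1 - \<epsilon>) * real k * real m"
    using \<open>r1 \<le> r2 * (1 - \<epsilon>)\<close> by (simp add: mult_right_mono)
  then have r1_threshold: "r1 * real k * real m \<le> ?\<tau>"
    by (simp add: ac_simps)
  show ?thesis
  proof (intro allI impI conjI ballI)
    fix B c assume "c \<in> supp C level children lmax k r2 B"
    then show "real m * (1 - \<epsilon>) \<le> real (card {v \<in> reps c. net_fires ?\<tau> F B (level c) v})"
      using faults \<open>\<epsilon> \<le> 1\<close>
      by (intro card_firing_reps_if_Bset[where r = r2]) (auto simp: mem_supp_iff ac_simps)
  next
    fix B c v assume "B \<subseteq> lvl C level 0" "c \<in> C - supp C level children lmax k r1 B" "v \<in> reps c"
    then show "\<not> net_fires ?\<tau> F B (level c) v"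
      using card_reps \<open>0 < m\<close> r1_threshold C_sub_D level_le
      by (intro no_firing_reps_if_not_Bset[where r = r1]) (auto simp: mem_supp_iff lvl_def)
  qed
qed

end
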